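(* Let $R$ and $B$ be disjoint finite sets of points in the plane such that no three points of $R\cup B$ are collinear, and let $f:R\to\{2,3,4,\ldots\}$ be a function. If $|B|=\sum_{x\in R}(f(x)-2)+2$, then there exists a non-crossing geometric spanning tree $T$ on $R\cup B$ such that the set of leaves of $T$ is exactly $B$ and $\deg_T(x)=f(x)$ for every $x\in R$.
   Context: A geometric spanning tree on a point set $P$ is a tree with vertex set $P$ whose edges are drawn as straight-line segments between their endpoints; it is non-crossing if no two edges intersect except at a common endpoint. $\deg_T(v)$ denotes the degree of vertex $v$ in $T$, and a leaf is a vertex of degree one. *)

theory Defs
  imports "HOL-Analysis.Analysis"
begin

type_synonym point = "real \<times> real"

definition adj :: "'a set set \<Rightarrow> 'a \<Rightarrow> 'a \<Rightarrow> bool" where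
  "adj E u v \<longleftrightarrow> {u, v} \<in> E \<and> u \<noteq> v"

definition graph_on :: "'a set \<Rightarrow> 'a set set \<Rightarrow> bool" where
  "graph_on V E \<longleftrightarrow> (\<forall>e\<in>E. e \<subseteq> V \<and> card e = 2)"

definition connected_graph :: "'a set \<Rightarrow> 'a set set \<Rightarrow> bool" where
  "connected_graph V E \<longleftrightarrow> (\<forall>u\<in>V. \<forall>v\<in>V. (adj E)\<^sup>*\<^sup>* u v)"

definition is_cycle :: "'a set set \<Rightarrow> 'a list \<Rightarrow> bool" where
  "is_cycle E vs \<longleftrightarrow> length vs \<ge> 3 \<and> distinct vs \<and>
     (\<forall>i. Suc i < length vs \<longrightarrow> adj E (vs ! i) (vs ! Suc i)) \<and>
     adj E (last vs) (hd vs)"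

definition is_tree :: "'a set \<Rightarrow> 'a set set \<Rightarrow> bool" where
  "is_tree V E \<longleftrightarrow> graph_on V E \<and> connected_graph V E \<and> (\<nexists>vs. is_cycle E vs)"

definition degree :: "'a set set \<Rightarrow> 'a \<Rightarrow> nat" where
  "degree E v = card {e \<in> E. v \<in> e}"

definition leaves :: "'a set \<Rightarrow> 'a set set \<Rightarrow> 'a set" where
  "leaves V E = {v \<in> V. degree E v = 1}"

definition non_crossing :: "point set set \<Rightarrow> bool" where
  "non_crossing E \<longleftrightarrow> (\<forall>a b c d. {a, b} \<in> E \<longrightarrow> {c, d} \<in> E \<longrightarrow> {a, b} \<noteq> {c, d} \<longrightarrow>
      closed_segment a b \<inter> closed_segment c d \<subseteq> {a, b} \<inter> {c, d})"

definition no_three_collinear :: "point set \<Rightarrow> bool" where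
  "no_three_collinear P \<longleftrightarrow> (\<forall>S \<subseteq> P. card S = 3 \<longrightarrow> \<not> collinear S)"

end

theory Submission
  imports Defs
begin

(* We prove the stronger statement that every tree degree sequence g (g >= 1 and
   sum (g x - 2) = -2) on a finite point set P in general position is the degree
   function of a non-crossing spanning tree, by induction on |P|.  Take the lowest-leftmost
   point p and list the other points counterclockwise around p.  Along this list the prefix
   sums of g - 2 drop by at most one per step, so a discrete intermediate value argument
   yields a line through p and one listed point that splits P into two parts meeting in a
   single point v, each of which carries a tree degree sequence once the degree of v is
   shared between them.  The trees obtained by induction lie in opposite closed half-planes
   and touch only at v, so their union is the required tree. *)

section \<open>Trees glued at a common vertex\<close>

lemma graph_on_edgeD:
  assumes "graph_on V E" "{a, b} \<in> E"
  shows "a \<noteq> b" "a \<in> V" "b \<in> V"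
  using assms unfolding graph_on_def by (auto simp: card_insert_if split: if_splits)

lemma finite_edges: "graph_on V E \<Longrightarrow> finite V \<Longrightarrow> finite E"
  unfolding graph_on_def by (meson Pow_iff finite_Pow_iff rev_finite_subset subsetI)

lemma degree_eq_0_if_not_vertex: "graph_on V E \<Longrightarrow> x \<notin> V \<Longrightarrow> degree E x = 0"
  unfolding graph_on_def degree_def by (metis (no_types, lifting) card.empty empty_Collect_eq subsetD)

lemma degree_Un:
  assumes "finite E" "finite E'" "E \<inter> E' = {}"
  shows "degree (E \<union> E') x = degree E x + degree E' x"
proof -
  have "{e \<in> E \<union> E'. x \<in> e} = {e \<in> E. x \<in> e} \<union> {e \<in> E'. x \<in> e}" by blast
  then show ?thesis
    unfolding degree_def using assms by (simp add: card_Un_disjoint disjoint_iff)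
qed

lemma adj_UnD:
  assumes "adj (E \<union> E') x y" "graph_on Y E'" "x \<notin> Y \<or> y \<notin> Y"
  shows "adj E x y"
  using assms graph_on_edgeD(2,3)[OF assms(2)] unfolding adj_def by blast

lemma adj_imp_vertex: "graph_on V E \<Longrightarrow> adj E x y \<Longrightarrow> x \<in> V \<and> y \<in> V"
  unfolding adj_def using graph_on_edgeD(2,3) by metis

lemma is_cycle_rotate1:
  assumes "is_cycle E vs"
  shows "is_cycle E (rotate1 vs)"
proof -
  obtain x xs where vs: "vs = x # xs" and len: "2 \<le> length xs"
    using assms unfolding is_cycle_def by (cases vs) auto
  have step: "\<And>i. Suc i < length vs \<Longrightarrow> adj E (vs ! i) (vs ! Suc i)"
    and close: "adj E (last vs) (hd vs)" using assms unfolding is_cycle_def by auto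
  have "adj E ((xs @ [x]) ! i) ((xs @ [x]) ! Suc i)" if "Suc i < length (xs @ [x])" for i
  proof (cases "Suc i < length xs")
    case True
    then show ?thesis using step[of "Suc i"] vs by (simp add: nth_append)
  next
    case False
    then have "i = length xs - 1" using that by simp
    then have "(xs @ [x]) ! i = last vs" "(xs @ [x]) ! Suc i = hd vs"
      using vs len by (auto simp: nth_append last_conv_nth)
    then show ?thesis using close by simp
  qed
  moreover have "adj E (last (xs @ [x])) (hd (xs @ [x]))"
    using step[of 0] vs len by (cases xs) auto
  ultimately show ?thesis using assms vs unfolding is_cycle_def by auto
qed

lemma is_cycle_rotate: "is_cycle E vs \<Longrightarrow> is_cycle E (rotate n vs)"
  by (induction n) (auto intro: is_cycle_rotate1)

lemma set_cycle_subset: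
  assumes "is_cycle E vs" "graph_on V E"
  shows "set vs \<subseteq> V"
proof
  fix x assume "x \<in> set vs"
  then obtain i where i: "i < length vs" "x = vs ! i" by (auto simp: in_set_conv_nth)
  show "x \<in> V"
  proof (cases "Suc i < length vs")
    case True
    then show ?thesis using assms i adj_imp_vertex unfolding is_cycle_def by metis
  next
    case False
    then have "i = length vs - 1" using i by simp
    moreover have "vs \<noteq> []" using i by auto
    ultimately have "x = last vs" using i by (simp add: last_conv_nth)
    then show ?thesis using assms adj_imp_vertex unfolding is_cycle_def by metis
  qed
qed

lemma is_cycle_rotate_to_head:
  assumes "is_cycle E vs"
  obtains ws where "is_cycle E ws" "\<And>i. 0 < i \<Longrightarrow> i < length ws \<Longrightarrow> ws ! i \<noteq> v"
proof (cases "v \<in> set vs")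
  case True
  then obtain j where j: "j < length vs" "vs ! j = v" by (auto simp: in_set_conv_nth)
  have rot: "is_cycle E (rotate j vs)" using is_cycle_rotate[OF assms] .
  have dist: "distinct (rotate j vs)" using rot unfolding is_cycle_def by simp
  have head: "rotate j vs ! 0 = v"
  proof -
    have ne: "vs \<noteq> []" using j by auto
    then have "rotate j vs ! 0 = hd (rotate j vs)" by (simp add: hd_conv_nth)
    also have "\<dots> = vs ! (j mod length vs)" using hd_rotate_conv_nth[OF ne] .
    finally show ?thesis using j by simp
  qed
  have "rotate j vs ! i \<noteq> v" if "0 < i" "i < length (rotate j vs)" for i
  proof -
    have "0 < length (rotate j vs)" using that(2) by linarith
    then show ?thesis using nth_eq_iff_index_eq[OF dist that(2)] head that(1) by force
  qed
  then show ?thesis using that[OF rot] by blast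
next
  case False
  then show ?thesis using that[OF assms] by (auto dest: nth_mem)
qed

text \<open>Away from the cut vertex, which may only occur at the head, every edge of the cycle
  shares a vertex outside Y with its predecessor, so the cycle never enters the second part.\<close>
lemma is_cycle_Un_cut_vertex:
  assumes cyc: "is_cycle (E \<union> E') vs" and "graph_on X E" "graph_on Y E'"
    and "X \<inter> Y \<subseteq> {v}" and off: "\<And>i. 0 < i \<Longrightarrow> i < length vs \<Longrightarrow> vs ! i \<noteq> v"
    and start: "vs ! 1 \<notin> Y"
  shows "is_cycle E vs"
proof -
  have step: "adj (E \<union> E') (vs ! i) (vs ! Suc i)" if "Suc i < length vs" for i
    using cyc that unfolding is_cycle_def by blast
  have notY: "vs ! i \<notin> Y" if "0 < i" "i < length vs" for i
    using that
  proof (induction i)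
    case (Suc i)
    show ?case
    proof (cases "i = 0")
      case False
      then have "vs ! i \<notin> Y" using Suc by simp
      then have "adj E (vs ! i) (vs ! Suc i)"
        using adj_UnD[OF step \<open>graph_on Y E'\<close>] Suc.prems by blast
      then have "vs ! Suc i \<in> X" using adj_imp_vertex[OF \<open>graph_on X E\<close>] by blast
      then show ?thesis using \<open>X \<inter> Y \<subseteq> {v}\<close> off[OF _ Suc.prems(2)] by blast
    qed (use start in simp)
  qed simp
  have len: "3 \<le> length vs" using cyc unfolding is_cycle_def by simp
  show ?thesis
    unfolding is_cycle_def
  proof (intro conjI allI impI)
    fix i assume "Suc i < length vs"
    then show "adj E (vs ! i) (vs ! Suc i)"
      using adj_UnD[OF step \<open>graph_on Y E'\<close>] notY[of "Suc i"] by simp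
  next
    have "vs \<noteq> []" using len by auto
    then have "last vs \<notin> Y" using notY[of "length vs - 1"] len by (simp add: last_conv_nth)
    moreover have "adj (E \<union> E') (last vs) (hd vs)" using cyc unfolding is_cycle_def by blast
    ultimately show "adj E (last vs) (hd vs)" using adj_UnD[OF _ \<open>graph_on Y E'\<close>] by simp
  qed (use cyc len in \<open>auto simp: is_cycle_def\<close>)
qed

lemma connected_graph_Un:
  assumes cX: "connected_graph X E" and cY: "connected_graph Y E'" and v: "v \<in> X" "v \<in> Y"
  shows "connected_graph (X \<union> Y) (E \<union> E')"
proof -
  have reach: "(adj (E \<union> E'))\<^sup>*\<^sup>* a b" if "a \<in> Z" "b \<in> Z" "connected_graph Z F" "F \<subseteq> E \<union> E'"
    for a b Z F
  proof -
    have "(adj F)\<^sup>*\<^sup>* a b" using that unfolding connected_graph_def by blast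
    then show ?thesis
      by (rule mono_rtranclp[rule_format, rotated]) (use that(4) in \<open>auto simp: adj_def\<close>)
  qed
  have via_v: "(adj (E \<union> E'))\<^sup>*\<^sup>* a v \<and> (adj (E \<union> E'))\<^sup>*\<^sup>* v a" if "a \<in> X \<union> Y" for a
    using that reach[OF _ _ cX, of a v] reach[OF _ _ cX, of v a] reach[OF _ _ cY, of a v]
      reach[OF _ _ cY, of v a] v by blast
  show ?thesis
    unfolding connected_graph_def using via_v by (meson rtranclp_trans)
qed

lemma is_tree_Un:
  assumes "is_tree X E" "is_tree Y E'" "X \<inter> Y = {v}"
  shows "is_tree (X \<union> Y) (E \<union> E')"
proof -
  have gX: "graph_on X E" and gY: "graph_on Y E'"
    and cX: "connected_graph X E" and cY: "connected_graph Y E'"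
    using assms unfolding is_tree_def by auto
  have graph: "graph_on (X \<union> Y) (E \<union> E')" using gX gY unfolding graph_on_def by blast
  have "v \<in> X" "v \<in> Y" and cut: "X \<inter> Y \<subseteq> {v}" "Y \<inter> X \<subseteq> {v}" using assms(3) by auto
  have "\<not> is_cycle (E \<union> E') vs" for vs
  proof
    assume "is_cycle (E \<union> E') vs"
    then obtain ws where cyc: "is_cycle (E \<union> E') ws"
      and off: "\<And>i. 0 < i \<Longrightarrow> i < length ws \<Longrightarrow> ws ! i \<noteq> v"
      using is_cycle_rotate_to_head by metis
    have "ws ! 1 \<in> set ws" using cyc unfolding is_cycle_def by simp
    then have "ws ! 1 \<in> X \<union> Y" using set_cycle_subset[OF cyc graph] by blast
    moreover have "ws ! 1 \<noteq> v" using off[of 1] cyc unfolding is_cycle_def by simp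
    ultimately have "ws ! 1 \<notin> Y \<or> ws ! 1 \<notin> X" using assms(3) by blast
    then show False
    proof
      assume "ws ! 1 \<notin> Y"
      then have "is_cycle E ws" using is_cycle_Un_cut_vertex[OF cyc gX gY cut(1) off] by blast
      then show False using assms(1) unfolding is_tree_def by blast
    next
      assume "ws ! 1 \<notin> X"
      moreover have "is_cycle (E' \<union> E) ws" using cyc by (simp add: sup_commute)
      ultimately have "is_cycle E' ws" using is_cycle_Un_cut_vertex[OF _ gY gX cut(2) off] by blast
      then show False using assms(2) unfolding is_tree_def by blast
    qed
  qed
  then show ?thesis
    using graph connected_graph_Un[OF cX cY \<open>v \<in> X\<close> \<open>v \<in> Y\<close>] unfolding is_tree_def by blast
qed

section \<open>Half-planes and non-crossing unions\<close>

definition cross :: "point \<Rightarrow> point \<Rightarrow> real" where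
  "cross u w = fst u * snd w - snd u * fst w"

lemma cross_swap: "cross w u = - cross u w"
  unfolding cross_def by simp

lemma cross_self [simp]: "cross u u = 0"
  unfolding cross_def by simp

lemma no_three_collinear_subset: "no_three_collinear P \<Longrightarrow> Q \<subseteq> P \<Longrightarrow> no_three_collinear Q"
  unfolding no_three_collinear_def by blast

lemma not_collinear_if_no_three_collinear:
  assumes "no_three_collinear P" "a \<in> P" "b \<in> P" "c \<in> P" "a \<noteq> b" "a \<noteq> c" "b \<noteq> c"
  shows "\<not> collinear {a, b, c}"
  using assms unfolding no_three_collinear_def
  by (metis (no_types, lifting) card_3_iff empty_subsetI insert_subset)

lemma mem_closed_segment_if_no_three_collinear:
  assumes "no_three_collinear P" "a \<in> P" "b \<in> P" "x \<in> P" "x \<in> closed_segment a b"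
  shows "x = a \<or> x = b"
proof (rule ccontr)
  assume "\<not> (x = a \<or> x = b)"
  moreover from this have "a \<noteq> b" using assms(5) by auto
  moreover have "collinear {a, x, b}"
    using assms(5) between_imp_collinear between_mem_segment by blast
  ultimately show False using not_collinear_if_no_three_collinear[OF assms(1,2,4,3)] by blast
qed

lemma cross_neq_0_if_no_three_collinear:
  assumes "no_three_collinear P" "a \<in> P" "b \<in> P" "c \<in> P" "a \<noteq> b" "a \<noteq> c" "b \<noteq> c"
  shows "cross (b - a) (c - a) \<noteq> 0"
proof
  assume cross0: "cross (b - a) (c - a) = 0"
  define u z where "u = b - a" and "z = c - a"
  have "u \<noteq> 0" using assms(5) unfolding u_def by simp
  then have "z = (if fst u = 0 then snd z / snd u else fst z / fst u) *\<^sub>R u"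
    using cross0 unfolding cross_def u_def[symmetric] z_def[symmetric]
    by (auto simp: prod_eq_iff field_simps)
  then have "collinear {0, u, z}" using collinear_lemma by metis
  then have "collinear {b, a, c}" using collinear_3[of b a c] unfolding u_def z_def by simp
  then show False
    using not_collinear_if_no_three_collinear[OF assms] by (simp add: insert_commute)
qed

lemma cross_pos_trans:
  assumes upper: "\<And>w. w \<in> {u, v, z} \<Longrightarrow> 0 < fst w \<or> (fst w = 0 \<and> 0 < snd w)"
    and "0 < cross u v" "0 < cross v z" "cross u z \<noteq> 0"
  shows "0 < cross u z"
proof -
  have pluecker: "cross u v * fst z + cross v z * fst u = cross u z * fst v"
    unfolding cross_def by (simp add: algebra_simps)
  have "0 \<le> fst u" "0 \<le> fst z" using upper[of u] upper[of z] by auto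
  moreover have "0 < fst v"
  proof (rule ccontr)
    assume "\<not> 0 < fst v"
    then have "fst v = 0" "0 < snd v" using upper[of v] by auto
    then have "cross v z = - (snd v * fst z)" by (simp add: cross_def)
    moreover have "0 \<le> snd v * fst z" using \<open>0 < snd v\<close> \<open>0 \<le> fst z\<close> by simp
    ultimately show False using \<open>0 < cross v z\<close> by simp
  qed
  moreover have "fst u \<noteq> 0 \<or> fst z \<noteq> 0"
    using \<open>cross u z \<noteq> 0\<close> unfolding cross_def by auto
  ultimately have "0 < cross u z * fst v"
    using assms(2,3) pluecker
    by (smt (verit, best) mult_nonneg_nonneg mult_pos_pos)
  then show ?thesis using \<open>0 < fst v\<close> by (simp add: zero_less_mult_iff)
qed

definition line_separated :: "point set \<Rightarrow> point set \<Rightarrow> point \<Rightarrow> bool" where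
  "line_separated X Y v \<longleftrightarrow>
     (\<exists>n c. inner n v = c \<and> (\<forall>y\<in>Y. c \<le> inner n y) \<and> (\<forall>x\<in>X - {v}. inner n x < c))"

lemma line_separatedI:
  assumes "\<forall>y\<in>Y. 0 \<le> cross u (y - v)" "\<forall>x\<in>X - {v}. cross u (x - v) < 0"
  shows "line_separated X Y v"
proof -
  have "cross u (x - v) = inner (- snd u, fst u) x - inner (- snd u, fst u) v" for x
    by (simp add: cross_def inner_prod_def algebra_simps)
  then show ?thesis
    unfolding line_separated_def using assms
    by (intro exI[of _ "(- snd u, fst u)"] exI[of _ "inner (- snd u, fst u) v"]) auto
qed

lemma closed_segment_leaves_halfspace_at_endpoint:
  fixes a b x n :: "'a::real_inner"
  assumes "x \<in> closed_segment a b" "inner n a < c" "inner n b \<le> c" "c \<le> inner n x"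
  shows "x = b"
proof -
  obtain t where t: "0 \<le> t" "t \<le> 1" "x = (1 - t) *\<^sub>R a + t *\<^sub>R b"
    using assms(1) in_segment(1) by blast
  have x_eq: "inner n x = (1 - t) * inner n a + t * inner n b"
    using t(3) by (simp add: inner_add_right)
  have "\<not> t < 1"
  proof
    assume "t < 1"
    then have "(1 - t) * inner n a < (1 - t) * c" using assms(2) by simp
    moreover have "t * inner n b \<le> t * c" using assms(3) t(1) by (rule mult_left_mono)
    moreover have "(1 - t) * c + t * c = c" by (simp add: algebra_simps)
    ultimately show False using assms(4) x_eq by linarith
  qed
  then show ?thesis using t by simp
qed

text \<open>A Y-edge stays in the closed half-plane, an X-edge can only touch the line at v,
  and v can only lie on a segment between points of the set as one of its endpoints.\<close>
lemma non_crossing_Un: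
  assumes ntc: "no_three_collinear (X \<union> Y)" and "X \<inter> Y = {v}" "line_separated X Y v"
    and gX: "graph_on X E" and gY: "graph_on Y E'" and "non_crossing E" "non_crossing E'"
  shows "non_crossing (E \<union> E')"
proof -
  obtain n c where v: "inner n v = c" and Y: "\<forall>y\<in>Y. c \<le> inner n y"
    and X: "\<forall>x\<in>X - {v}. inner n x < c"
    using assms(3) unfolding line_separated_def by blast
  have X_le: "inner n x \<le> c" if "x \<in> X" for x
  proof (cases "x = v")
    case False
    then show ?thesis using bspec[OF X, of x] that by simp
  qed (use v in simp)
  have across: "closed_segment a b \<inter> closed_segment a' b' \<subseteq> {a, b} \<inter> {a', b'}"
    if "{a, b} \<in> E'" "{a', b'} \<in> E" for a b a' b'
  proof
    fix x assume x: "x \<in> closed_segment a b \<inter> closed_segment a' b'"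
    have ab: "a \<in> Y" "b \<in> Y" using graph_on_edgeD[OF gY that(1)] by auto
    have a'b': "a' \<noteq> b'" "a' \<in> X" "b' \<in> X" using graph_on_edgeD[OF gX that(2)] by auto
    have "closed_segment a b \<subseteq> {y. c \<le> inner n y}"
      using ab Y by (intro closed_segment_subset convex_halfspace_ge) auto
    then have cx: "c \<le> inner n x" using x by blast
    have "x \<in> {a', b'}"
    proof (cases "a' = v")
      case True
      then have "inner n b' < c" using X a'b' by blast
      then show ?thesis
        using closed_segment_leaves_halfspace_at_endpoint[of x b' a' n c] x cx X_le a'b'
        by (auto simp: closed_segment_commute)
    next
      case False
      then have "inner n a' < c" using X a'b' by blast
      then show ?thesis
        using closed_segment_leaves_halfspace_at_endpoint[of x a' b' n c] x cx X_le a'b' by auto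
    qed
    then have "x = v" using X cx a'b' by force
    then have "x \<in> {a, b}"
      using mem_closed_segment_if_no_three_collinear[OF ntc, of a b v] x ab assms(2) by auto
    then show "x \<in> {a, b} \<inter> {a', b'}" using \<open>x \<in> {a', b'}\<close> by blast
  qed
  show ?thesis
    unfolding non_crossing_def
  proof (intro allI impI)
    fix a b a' b'
    assume "{a, b} \<in> E \<union> E'" "{a', b'} \<in> E \<union> E'" "{a, b} \<noteq> {a', b'}"
    then show "closed_segment a b \<inter> closed_segment a' b' \<subseteq> {a, b} \<inter> {a', b'}"
      using assms(6,7) across across[of a' b' a b] unfolding non_crossing_def by blast
  qed
qed

section \<open>Plane trees with prescribed degrees\<close>

definition tree_degree_sequence :: "'a set \<Rightarrow> ('a \<Rightarrow> nat) \<Rightarrow> bool" where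
  "tree_degree_sequence P g \<longleftrightarrow> 2 \<le> card P \<and> (\<forall>x\<in>P. 1 \<le> g x) \<and> (\<Sum>x\<in>P. int (g x) - 2) = -2"

lemma tree_degree_sequenceD:
  assumes "tree_degree_sequence P g"
  shows "finite P" "2 \<le> card P" "x \<in> P \<Longrightarrow> 1 \<le> g x" "(\<Sum>x\<in>P. int (g x) - 2) = -2"
  using assms unfolding tree_degree_sequence_def by (auto intro: card_ge_0_finite)

lemma tree_degree_sequence_updI:
  assumes "finite X" "v \<in> X" "\<forall>x\<in>X - {v}. 1 \<le> g x" "1 \<le> a"
    and balance: "(\<Sum>x\<in>X - {v}. int (g x) - 2) + int a = 0"
  shows "tree_degree_sequence X (g(v := a))"
proof -
  have "(\<Sum>x\<in>X. int ((g(v := a)) x) - 2) = (int a - 2) + (\<Sum>x\<in>X - {v}. int ((g(v := a)) x) - 2)"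
    by (subst sum.remove[OF assms(1,2)]) simp
  also have "(\<Sum>x\<in>X - {v}. int ((g(v := a)) x) - 2) = (\<Sum>x\<in>X - {v}. int (g x) - 2)"
    by (rule sum.cong) auto
  finally have sum: "(\<Sum>x\<in>X. int ((g(v := a)) x) - 2) = -2" using balance by simp
  have "X - {v} \<noteq> {}"
  proof
    assume empty: "X - {v} = {}"
    show False using balance \<open>1 \<le> a\<close> by (simp add: empty)
  qed
  then obtain x where "x \<in> X" "x \<noteq> v" by blast
  then have "2 \<le> card X" using card_mono[OF assms(1), of "{v, x}"] assms(2) by auto
  then show ?thesis unfolding tree_degree_sequence_def using sum assms(3,4) by auto
qed

definition plane_tree_realizable :: "point set \<Rightarrow> (point \<Rightarrow> nat) \<Rightarrow> bool" where
  "plane_tree_realizable P g \<longleftrightarrow> (\<exists>E. is_tree P E \<and> non_crossing E \<and> (\<forall>x\<in>P. degree E x = g x))"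

lemma plane_tree_realizable_if_card_eq_2:
  assumes "card P = 2" "tree_degree_sequence P g"
  shows "plane_tree_realizable P g"
proof -
  obtain a b where P: "P = {a, b}" "a \<noteq> b" using assms(1) by (meson card_2_iff)
  have "1 \<le> g a" "1 \<le> g b" using tree_degree_sequenceD(3)[OF assms(2)] P by auto
  moreover have "int (g a) - 2 + (int (g b) - 2) = -2"
    using tree_degree_sequenceD(4)[OF assms(2)] P by simp
  ultimately have "g a = 1" "g b = 1" by linarith+
  let ?E = "{{a, b}}"
  have graph: "graph_on {a, b} ?E" using P(2) unfolding graph_on_def by simp
  have "adj ?E a b" "adj ?E b a" using P(2) unfolding adj_def by (auto simp: insert_commute)
  then have conn: "connected_graph {a, b} ?E" unfolding connected_graph_def by auto
  have acyclic: "\<not> is_cycle ?E vs" for vs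
  proof
    assume cyc: "is_cycle ?E vs"
    then have "card (set vs) \<le> card {a, b}"
      using set_cycle_subset[OF cyc graph] by (intro card_mono) auto
    then show False using cyc distinct_card[of vs] P(2) unfolding is_cycle_def by simp
  qed
  have "{e \<in> ?E. x \<in> e} = ?E" if "x \<in> {a, b}" for x using that by auto
  then have "degree ?E x = g x" if "x \<in> {a, b}" for x
    using that \<open>g a = 1\<close> \<open>g b = 1\<close> unfolding degree_def by auto
  moreover have "non_crossing ?E" unfolding non_crossing_def by auto
  ultimately show ?thesis
    unfolding plane_tree_realizable_def is_tree_def P(1) using graph conn acyclic by blast
qed

lemma edges_disjoint_if_Int_singleton:
  assumes "graph_on X E" "graph_on Y E'" "X \<inter> Y = {v}"
  shows "E \<inter> E' = {}"
proof (rule ccontr)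
  assume "E \<inter> E' \<noteq> {}"
  then obtain e where "e \<in> E" "e \<in> E'" by blast
  then have "e \<subseteq> {v}" "card e = 2" using assms unfolding graph_on_def by blast+
  then show False using card_mono[of "{v}" e] by simp
qed

lemma plane_tree_realizable_Un:
  assumes fin: "finite (X \<union> Y)" and ntc: "no_three_collinear (X \<union> Y)"
    and cut: "X \<inter> Y = {v}" and sep: "line_separated X Y v"
    and "plane_tree_realizable X (g(v := a))" "plane_tree_realizable Y (g(v := b))"
    and "a + b = g v"
  shows "plane_tree_realizable (X \<union> Y) g"
proof -
  obtain E E' where T: "is_tree X E" "non_crossing E" "\<forall>x\<in>X. degree E x = (g(v := a)) x"
    and T': "is_tree Y E'" "non_crossing E'" "\<forall>y\<in>Y. degree E' y = (g(v := b)) y"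
    using assms(5,6) unfolding plane_tree_realizable_def by blast
  have gX: "graph_on X E" and gY: "graph_on Y E'" using T(1) T'(1) unfolding is_tree_def by auto
  have disjoint: "E \<inter> E' = {}" using edges_disjoint_if_Int_singleton[OF gX gY cut] .
  have "finite X" "finite Y" using fin by auto
  then have deg: "degree (E \<union> E') x = degree E x + degree E' x" for x
    using degree_Un[OF finite_edges[OF gX] finite_edges[OF gY] disjoint] by blast
  have "degree (E \<union> E') x = g x" if "x \<in> X \<union> Y" for x
  proof (cases "x = v")
    case True
    have "v \<in> X" "v \<in> Y" using cut by auto
    then show ?thesis using True deg[of v] T(3) T'(3) assms(7) by simp
  next
    case x_ne_v: False
    show ?thesis
    proof (cases "x \<in> X")
      case True
      then have "x \<notin> Y" using x_ne_v cut by blast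
      then show ?thesis using deg T(3) degree_eq_0_if_not_vertex[OF gY] True x_ne_v by simp
    next
      case False
      then have "x \<in> Y" using that by blast
      then show ?thesis using deg T'(3) degree_eq_0_if_not_vertex[OF gX False] x_ne_v by simp
    qed
  qed
  then show ?thesis
    using is_tree_Un[OF T(1) T'(1) cut] non_crossing_Un[OF ntc cut sep gX gY T(2) T'(2)]
    unfolding plane_tree_realizable_def by blast
qed

section \<open>Counterclockwise order around an extreme point\<close>

lemma lowest_leftmost_point:
  fixes P :: "point set"
  assumes "finite P" "P \<noteq> {}"
  obtains p where "p \<in> P"
    "\<And>q. q \<in> P - {p} \<Longrightarrow> 0 < fst (q - p) \<or> (fst (q - p) = 0 \<and> 0 < snd (q - p))"
proof -
  define P0 where "P0 = {q \<in> P. fst q = Min (fst ` P)}"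
  have "Min (fst ` P) \<in> fst ` P" using assms by simp
  then have "P0 \<noteq> {}" unfolding P0_def by force
  moreover have "finite P0" unfolding P0_def using assms(1) by simp
  ultimately have "Min (snd ` P0) \<in> snd ` P0" by simp
  then obtain p where p: "p \<in> P0" "snd p = Min (snd ` P0)" by force
  show thesis
  proof (rule that)
    show "p \<in> P" using p(1) unfolding P0_def by simp
    fix q assume q: "q \<in> P - {p}"
    have "fst p \<le> fst q" using p(1) q assms(1) unfolding P0_def by simp
    moreover have "snd p < snd q" if "fst q = fst p"
    proof -
      have "q \<in> P0" using that p(1) q unfolding P0_def by simp
      then have "snd p \<le> snd q" using p(2) \<open>finite P0\<close> by simp
      moreover have "q \<noteq> p" using q by simp
      ultimately show ?thesis using that by (auto simp: prod_eq_iff)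
    qed
    ultimately show "0 < fst (q - p) \<or> (fst (q - p) = 0 \<and> 0 < snd (q - p))"
      by (cases "fst q = fst p") auto
  qed
qed

lemma strict_total_order_enumeration:
  assumes "finite Q" "irreflp_on Q R" "transp_on Q R" "totalp_on Q R"
  obtains s where "bij_betw s {..<card Q} Q" "\<And>i j. i < j \<Longrightarrow> j < card Q \<Longrightarrow> R (s i) (s j)"
proof -
  define rank where "rank q = card {x \<in> Q. R x q}" for q
  have mono: "rank a < rank b" if "a \<in> Q" "b \<in> Q" "R a b" for a b
  proof -
    have "{x \<in> Q. R x a} \<subset> {x \<in> Q. R x b}"
      using that assms(2,3) unfolding irreflp_on_def transp_on_def by blast
    then show ?thesis unfolding rank_def using assms(1) by (simp add: psubset_card_mono)
  qed
  have inj: "inj_on rank Q"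
  proof (rule inj_onI, rule ccontr)
    fix a b assume "a \<in> Q" "b \<in> Q" "rank a = rank b" "a \<noteq> b"
    then show False using totalp_onD[OF assms(4)] mono[of a b] mono[of b a] by auto
  qed
  have "rank q < card Q" if "q \<in> Q" for q
  proof -
    have "{x \<in> Q. R x q} \<subset> Q" using that assms(2) unfolding irreflp_on_def by blast
    then show ?thesis unfolding rank_def using assms(1) by (simp add: psubset_card_mono)
  qed
  then have "rank ` Q = {..<card Q}"
    using inj by (intro card_subset_eq) (auto simp: card_image)
  then have "bij_betw rank Q {..<card Q}" using inj unfolding bij_betw_def by blast
  then have bij: "bij_betw (the_inv_into Q rank) {..<card Q} Q" by (rule bij_betw_the_inv_into)
  show thesis
  proof (rule that[OF bij])
    fix i j assume "i < j" "j < card Q"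
    define a b where "a = the_inv_into Q rank i" and "b = the_inv_into Q rank j"
    have "a \<in> Q" "b \<in> Q" "rank a = i" "rank b = j"
      using \<open>i < j\<close> \<open>j < card Q\<close> bij_betwE[OF bij] \<open>bij_betw rank Q {..<card Q}\<close>
      unfolding a_def b_def by (auto simp: f_the_inv_into_f_bij_betw)
    then show "R a b"
      using \<open>i < j\<close> mono[of b a] assms(4) unfolding totalp_on_def by fastforce
  qed
qed

locale ccw_enumeration =
  fixes P :: "point set" and p :: point and s :: "nat \<Rightarrow> point" and M :: nat
  assumes apex: "p \<in> P"
    and enum: "bij_betw s {..<M} (P - {p})"
    and ccw: "\<And>i j. i < j \<Longrightarrow> j < M \<Longrightarrow> 0 < cross (s i - p) (s j - p)"
begin

lemma inj_s: "inj_on s {..<M}"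
  using enum by (rule bij_betw_imp_inj_on)

lemma image_s: "s ` {..<M} = P - {p}"
  using enum by (rule bij_betw_imp_surj_on)

lemma P_eq: "P = insert p (s ` {..<M})"
  using image_s apex by blast

lemma s_neq_apex: "i < M \<Longrightarrow> s i \<noteq> p"
  using image_s by blast

lemma apex_notin_image:
  assumes "n \<le> M"
  shows "p \<notin> s ` {m..<n}"
proof
  assume "p \<in> s ` {m..<n}"
  then obtain i where "i < n" "p = s i" by auto
  then show False using s_neq_apex[of i] assms by simp
qed

lemma s_eq_s_iff: "i < M \<Longrightarrow> j < M \<Longrightarrow> s i = s j \<longleftrightarrow> i = j"
  using inj_on_eq_iff[OF inj_s] by blast

lemma cross_s_neg: "i < k \<Longrightarrow> k < M \<Longrightarrow> cross (s k - p) (s i - p) < 0"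
  using ccw cross_swap by (metis neg_less_0_iff_less)

lemma line_separated_after:
  assumes "k < M" "v \<in> {p, s k}"
    and "X - {v} \<subseteq> s ` {Suc k..<M}" "Y \<subseteq> insert p (s ` {0..<Suc k})"
  shows "line_separated X Y v"
proof (rule line_separatedI[where u = "p - s k"])
  have flip: "cross (p - s k) (x - v) = - cross (s k - p) (x - p)" for x
    using assms(2) by (auto simp: cross_def algebra_simps)
  show "\<forall>y\<in>Y. 0 \<le> cross (p - s k) (y - v)"
  proof
    fix y assume "y \<in> Y"
    then consider "y = p" | i where "i \<in> {0..<Suc k}" "y = s i" using assms(4) by blast
    then show "0 \<le> cross (p - s k) (y - v)"
    proof cases
      case (2 i)
      then show ?thesis
        using flip cross_s_neg[of i k] assms(1) by (cases "i = k") (auto simp: less_Suc_eq)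
    qed (use flip[of p] in \<open>simp add: cross_def\<close>)
  qed
  show "\<forall>x\<in>X - {v}. cross (p - s k) (x - v) < 0"
  proof
    fix x assume "x \<in> X - {v}"
    then obtain i where "i \<in> {Suc k..<M}" "x = s i" using assms(3) by blast
    then show "cross (p - s k) (x - v) < 0" using flip ccw[of k i] by simp
  qed
qed

lemma line_separated_before:
  assumes "k < M" "v \<in> {p, s k}"
    and "X - {v} \<subseteq> s ` {0..<k}" "Y \<subseteq> insert p (s ` {k..<M})"
  shows "line_separated X Y v"
proof (rule line_separatedI[where u = "s k - p"])
  have shift: "cross (s k - p) (x - v) = cross (s k - p) (x - p)" for x
    using assms(2) by (auto simp: cross_def algebra_simps)
  show "\<forall>y\<in>Y. 0 \<le> cross (s k - p) (y - v)"
  proof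
    fix y assume "y \<in> Y"
    then consider "y = p" | i where "i \<in> {k..<M}" "y = s i" using assms(4) by blast
    then show "0 \<le> cross (s k - p) (y - v)"
    proof cases
      case (2 i)
      then show ?thesis using shift ccw[of k i] by (cases "i = k") auto
    qed (use shift[of p] in \<open>simp add: cross_def\<close>)
  qed
  show "\<forall>x\<in>X - {v}. cross (s k - p) (x - v) < 0"
  proof
    fix x assume "x \<in> X - {v}"
    then obtain i where "i \<in> {0..<k}" "x = s i" using assms(3) by blast
    then show "cross (s k - p) (x - v) < 0" using shift cross_s_neg[of i k] assms(1) by simp
  qed
qed

end

lemma ccw_enumeration_exists:
  assumes "finite P" "P \<noteq> {}" "no_three_collinear P"
  obtains p s where "ccw_enumeration P p s (card P - 1)"
proof -
  obtain p where p: "p \<in> P"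
    and upper: "\<And>q. q \<in> P - {p} \<Longrightarrow> 0 < fst (q - p) \<or> (fst (q - p) = 0 \<and> 0 < snd (q - p))"
    using lowest_leftmost_point[OF assms(1,2)] by blast
  define R where "R a b \<longleftrightarrow> 0 < cross (a - p) (b - p)" for a b
  have nz: "cross (a - p) (b - p) \<noteq> 0" if "a \<in> P - {p}" "b \<in> P - {p}" "a \<noteq> b" for a b
    using cross_neq_0_if_no_three_collinear[OF assms(3) p, of a b] that by auto
  have "irreflp_on (P - {p}) R" unfolding irreflp_on_def R_def by simp
  moreover have "totalp_on (P - {p}) R"
    unfolding totalp_on_def R_def
  proof (intro ballI impI)
    fix a b assume "a \<in> P - {p}" "b \<in> P - {p}" "a \<noteq> b"
    then show "0 < cross (a - p) (b - p) \<or> 0 < cross (b - p) (a - p)"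
      using nz cross_swap[of "b - p" "a - p"] by fastforce
  qed
  moreover have "transp_on (P - {p}) R"
    unfolding transp_on_def
  proof (intro ballI impI)
    fix a b c assume abc: "a \<in> P - {p}" "b \<in> P - {p}" "c \<in> P - {p}" "R a b" "R b c"
    show "R a c"
    proof (cases "a = c")
      case True
      then show ?thesis using abc(4,5) cross_swap[of "a - p" "b - p"] unfolding R_def by simp
    next
      case False
      then show ?thesis
        using cross_pos_trans[of "a - p" "b - p" "c - p"] upper abc nz unfolding R_def by blast
    qed
  qed
  ultimately obtain s where "bij_betw s {..<card (P - {p})} (P - {p})"
    "\<And>i j. i < j \<Longrightarrow> j < card (P - {p}) \<Longrightarrow> R (s i) (s j)"
    using strict_total_order_enumeration[of "P - {p}" R] assms(1) by blast
  then show thesis using that[of p s] p assms(1) unfolding ccw_enumeration_def R_def by simp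
qed

section \<open>Balanced splits\<close>

definition balanced_split ::
    "point set \<Rightarrow> (point \<Rightarrow> nat) \<Rightarrow> point set \<Rightarrow> point set \<Rightarrow> point \<Rightarrow> bool" where
  "balanced_split P g X Y v \<longleftrightarrow> X \<union> Y = P \<and> X \<inter> Y = {v} \<and> line_separated X Y v \<and>
     (\<exists>a b. a + b = g v \<and> tree_degree_sequence X (g(v := a)) \<and> tree_degree_sequence Y (g(v := b)))"

lemma balanced_splitI:
  assumes "tree_degree_sequence P g" "X \<union> Y = P" "X \<inter> Y = {v}" "line_separated X Y v"
    and "1 \<le> a" "1 \<le> b" "a + b = g v"
    and "(\<Sum>x\<in>X - {v}. int (g x) - 2) + int a = 0" "(\<Sum>y\<in>Y - {v}. int (g y) - 2) + int b = 0"
  shows "balanced_split P g X Y v"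
proof -
  have "finite X" "finite Y" "\<forall>x\<in>X. 1 \<le> g x" "\<forall>y\<in>Y. 1 \<le> g y"
    using tree_degree_sequenceD[OF assms(1)] assms(2) by auto
  moreover have "v \<in> X" "v \<in> Y" using assms(3) by auto
  ultimately have "tree_degree_sequence X (g(v := a))" "tree_degree_sequence Y (g(v := b))"
    using tree_degree_sequence_updI[of X v g a] tree_degree_sequence_updI[of Y v g b] assms(5-)
    by auto
  then show ?thesis unfolding balanced_split_def using assms(2-4,7) by blast
qed

lemma balanced_split_psubset:
  assumes "balanced_split P g X Y v"
  shows "X \<subset> P" "Y \<subset> P"
proof -
  have proper: "Z \<subset> P" if "Z \<union> W = P" "Z \<inter> W = {v}" "2 \<le> card W" for Z W
  proof -
    have "\<not> W \<subseteq> {v}" using \<open>2 \<le> card W\<close> card_mono[of "{v}" W] by auto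
    then obtain w where "w \<in> W" "w \<noteq> v" by blast
    then show ?thesis using that by blast
  qed
  obtain a b where XY: "X \<union> Y = P" "X \<inter> Y = {v}"
    and "tree_degree_sequence X (g(v := a))" "tree_degree_sequence Y (g(v := b))"
    using assms unfolding balanced_split_def by blast
  then have "2 \<le> card X" "2 \<le> card Y" using tree_degree_sequenceD(2) by blast+
  then show "X \<subset> P" "Y \<subset> P"
    using proper[of X Y] proper[of Y X] XY by (simp_all add: Un_commute Int_commute)
qed

lemma nat_predicate_switch:
  assumes "Q m" "\<not> Q n" "m \<le> n"
  shows "\<exists>k. m \<le> k \<and> k < n \<and> Q k \<and> \<not> Q (Suc k)"
  using assms(3,2)
proof (induction n rule: dec_induct)
  case base
  then show ?case using assms(1) by simp
next
  case (step n)
  then show ?case by (cases "Q n") (auto intro: less_SucI)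
qed

locale ccw_degree_enumeration = ccw_enumeration +
  fixes g :: "point \<Rightarrow> nat"
  assumes degrees: "tree_degree_sequence P g"
begin

definition excess :: "nat \<Rightarrow> int" where
  "excess k = (\<Sum>i<k. int (g (s i)) - 2)"

lemma s_mem: "i < M \<Longrightarrow> s i \<in> P"
  using image_s by blast

lemma g_ge_1: "x \<in> P \<Longrightarrow> 1 \<le> g x"
  using tree_degree_sequenceD(3)[OF degrees] .

lemma excess_0 [simp]: "excess 0 = 0"
  unfolding excess_def by simp

lemma excess_Suc: "excess (Suc k) = excess k + int (g (s k)) - 2"
  unfolding excess_def by simp

lemma excess_Suc_ge: "k < M \<Longrightarrow> excess k - 1 \<le> excess (Suc k)"
  using g_ge_1[OF s_mem] excess_Suc by force

lemma sum_image_s: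
  assumes "m \<le> n" "n \<le> M"
  shows "(\<Sum>x\<in>s ` {m..<n}. int (g x) - 2) = excess n - excess m"
proof -
  have "inj_on s {m..<n}" by (rule inj_on_subset[OF inj_s]) (use assms(2) in auto)
  then have "(\<Sum>x\<in>s ` {m..<n}. int (g x) - 2) = (\<Sum>i=m..<n. int (g (s i)) - 2)"
    by (simp add: sum.reindex)
  also have "\<dots> = excess n - excess m"
    using sum.atLeastLessThan_concat[of 0 m n "\<lambda>i. int (g (s i)) - 2"] assms(1)
    unfolding excess_def by (simp add: atLeast0LessThan)
  finally show ?thesis .
qed

lemma excess_M: "excess M = - int (g p)"
proof -
  have "-2 = (\<Sum>x\<in>P. int (g x) - 2)" using tree_degree_sequenceD(4)[OF degrees] by simp
  also have "\<dots> = int (g p) - 2 + (\<Sum>x\<in>s ` {0..<M}. int (g x) - 2)"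
    using P_eq apex_notin_image[of M 0] by (simp add: atLeast0LessThan)
  also have "\<dots> = int (g p) - 2 + excess M" using sum_image_s[of 0 M] by simp
  finally show ?thesis by simp
qed

lemma split_at_apex:
  assumes "2 \<le> g p"
  shows "\<exists>X Y. balanced_split P g X Y p"
proof -
  obtain k where k: "k < M" "0 \<le> excess k" "\<not> 0 \<le> excess (Suc k)"
    using nat_predicate_switch[of "\<lambda>k. 0 \<le> excess k" 0 M] excess_M assms by auto
  then have drop: "excess (Suc k) = -1" using excess_Suc_ge[OF k(1)] by linarith
  define X Y where "X = insert p (s ` {Suc k..<M})" and "Y = insert p (s ` {0..<Suc k})"
  have "balanced_split P g X Y p"
  proof (rule balanced_splitI[OF degrees, where a = "g p - 1" and b = 1])
    have "{Suc k..<M} \<union> {0..<Suc k} = {..<M}" using k(1) by auto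
    then show "X \<union> Y = P" unfolding X_def Y_def P_eq by (auto simp flip: image_Un)
    show "X \<inter> Y = {p}" unfolding X_def Y_def using k(1) by (auto simp: s_eq_s_iff)
    show "line_separated X Y p"
      using k(1) by (intro line_separated_after) (auto simp: X_def Y_def)
    show "(\<Sum>x\<in>X - {p}. int (g x) - 2) + int (g p - 1) = 0"
      using apex_notin_image[of M "Suc k"] sum_image_s[of "Suc k" M] k(1) drop excess_M assms
      unfolding X_def by (simp add: of_nat_diff)
    show "(\<Sum>y\<in>Y - {p}. int (g y) - 2) + int 1 = 0"
      using apex_notin_image[of "Suc k" 0] sum_image_s[of 0 "Suc k"] k(1) drop
      unfolding Y_def by simp
  qed (use assms in auto)
  then show ?thesis by blast
qed

lemma split_at_first_neighbour:
  assumes "g p = 1" "2 \<le> g (s 0)" "0 < M"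
  shows "\<exists>X Y. balanced_split P g X Y (s 0)"
proof -
  define X Y where "X = s ` {..<M}" and "Y = {p, s 0}"
  have X_minus: "X - {s 0} = s ` {Suc 0..<M}"
    unfolding X_def using assms(3) by (auto simp: s_eq_s_iff)
  have "balanced_split P g X Y (s 0)"
  proof (rule balanced_splitI[OF degrees, where a = "g (s 0) - 1" and b = 1])
    show "X \<union> Y = P" unfolding X_def Y_def P_eq using assms(3) by auto
    have "p \<notin> X" "s 0 \<in> X" unfolding X_def using image_s assms(3) by auto
    then show "X \<inter> Y = {s 0}" unfolding Y_def by auto
    show "line_separated X Y (s 0)"
      using assms(3) X_minus by (intro line_separated_after[of 0]) (auto simp: Y_def)
    show "(\<Sum>x\<in>X - {s 0}. int (g x) - 2) + int (g (s 0) - 1) = 0"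
      using X_minus sum_image_s[of 1 M] assms excess_M by (simp add: excess_def of_nat_diff)
    have "Y - {s 0} = {p}" unfolding Y_def using s_neq_apex[of 0] assms(3) by auto
    then show "(\<Sum>y\<in>Y - {s 0}. int (g y) - 2) + int 1 = 0" using assms(1) by simp
  qed (use assms in auto)
  then show ?thesis by blast
qed

lemma split_at_inner_point:
  assumes "g p = 1" "g (s 0) = 1" "2 \<le> M"
  shows "\<exists>X Y v. balanced_split P g X Y v"
proof -
  have "excess 1 = -1" using assms(2) by (simp add: excess_def)
  then obtain k where k: "1 \<le> k" "k < M" "excess k \<le> -1"
    and "\<not> (excess (Suc k) \<le> -1 \<and> Suc k < M)"
    using nat_predicate_switch[of "\<lambda>k. excess k \<le> -1 \<and> k < M" 1 M] assms(3) by auto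
  then have rise: "-1 \<le> excess (Suc k)" using excess_M assms(1) by (cases "Suc k = M") auto
  define X Y where "X = s ` {0..<Suc k}" and "Y = insert p (s ` {k..<M})"
  define a b where "a = nat (- excess k)" and "b = nat (excess (Suc k) + 2)"
  have X_minus: "X - {s k} = s ` {0..<k}"
    unfolding X_def using k(2) by (auto simp: s_eq_s_iff)
  have Y_minus: "Y - {s k} = insert p (s ` {Suc k..<M})"
    unfolding Y_def using k(2) s_neq_apex[of k] by (auto simp: s_eq_s_iff)
  have "balanced_split P g X Y (s k)"
  proof (rule balanced_splitI[OF degrees, where a = a and b = b])
    have "{0..<Suc k} \<union> {k..<M} = {..<M}" using k(2) by auto
    then show "X \<union> Y = P" unfolding X_def Y_def P_eq by (auto simp flip: image_Un)
    have "p \<notin> X" unfolding X_def using apex_notin_image[of "Suc k" 0] k(2) by simp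
    then show "X \<inter> Y = {s k}" unfolding Y_def using k(2) by (auto simp: X_def s_eq_s_iff)
    show "line_separated X Y (s k)"
      using k(2) X_minus by (intro line_separated_before) (auto simp: Y_def)
    show "1 \<le> a" "1 \<le> b" using k(3) rise unfolding a_def b_def by auto
    show "a + b = g (s k)" using k(3) rise excess_Suc[of k] unfolding a_def b_def by linarith
    show "(\<Sum>x\<in>X - {s k}. int (g x) - 2) + int a = 0"
      using X_minus sum_image_s[of 0 k] k unfolding a_def by simp
    show "(\<Sum>y\<in>Y - {s k}. int (g y) - 2) + int b = 0"
      using Y_minus sum_image_s[of "Suc k" M] apex_notin_image[of M "Suc k"] k(2) rise
        excess_M assms(1) unfolding b_def by simp
  qed
  then show ?thesis by blast
qed

end

lemma balanced_split_exists:
  assumes "no_three_collinear P" "tree_degree_sequence P g" "3 \<le> card P"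
  shows "\<exists>X Y v. balanced_split P g X Y v"
proof -
  have fin: "finite P" and "P \<noteq> {}" using assms(3) by (auto intro: card_ge_0_finite)
  obtain p s where "ccw_enumeration P p s (card P - 1)"
    using ccw_enumeration_exists[OF fin \<open>P \<noteq> {}\<close> assms(1)] by blast
  then interpret ccw_degree_enumeration P p s "card P - 1" g
    using assms(2) by (simp add: ccw_degree_enumeration_def ccw_degree_enumeration_axioms_def)
  have M: "2 \<le> card P - 1" using assms(3) by simp
  have "1 \<le> g p" "1 \<le> g (s 0)" using g_ge_1 apex s_mem M by auto
  then consider "2 \<le> g p" | "g p = 1" "2 \<le> g (s 0)" | "g p = 1" "g (s 0) = 1"
    by (cases "g p = 1"; cases "g (s 0) = 1") auto
  then show ?thesis
  proof cases
    case 1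
    then show ?thesis using split_at_apex by blast
  next
    case 2
    moreover have "0 < card P - 1" using M by simp
    ultimately show ?thesis using split_at_first_neighbour by blast
  next
    case 3
    then show ?thesis using split_at_inner_point M by blast
  qed
qed

theorem plane_tree_realizable_if_tree_degree_sequence:
  assumes "no_three_collinear P" "tree_degree_sequence P g"
  shows "plane_tree_realizable P g"
  using assms
proof (induction "card P" arbitrary: P g rule: less_induct)
  case less
  note ntc = less.prems(1) and tds = less.prems(2)
  have fin: "finite P" using tree_degree_sequenceD(1)[OF tds] .
  show ?case
  proof (cases "card P = 2")
    case True
    then show ?thesis using plane_tree_realizable_if_card_eq_2 tds by blast
  next
    case False
    then obtain X Y v where split: "balanced_split P g X Y v"
      using balanced_split_exists[OF ntc tds] tree_degree_sequenceD(2)[OF tds] by fastforce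
    then obtain a b where XY: "X \<union> Y = P" "X \<inter> Y = {v}" "line_separated X Y v" "a + b = g v"
      and tds': "tree_degree_sequence X (g(v := a))" "tree_degree_sequence Y (g(v := b))"
      unfolding balanced_split_def by blast
    have "card X < card P" "card Y < card P"
      using balanced_split_psubset[OF split] psubset_card_mono[OF fin] by blast+
    then have "plane_tree_realizable X (g(v := a))" "plane_tree_realizable Y (g(v := b))"
      using less.hyps tds' no_three_collinear_subset[OF ntc] XY(1) by blast+
    then show ?thesis using plane_tree_realizable_Un[of X Y v g a b] XY ntc fin by simp
  qed
qed

theorem proposition4:
  fixes R B :: "point set" and f :: "point \<Rightarrow> nat"
  assumes "finite R" and "finite B" and "R \<inter> B = {}"
    and "no_three_collinear (R \<union> B)"
    and "\<forall>x\<in>R. f x \<ge> 2"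
    and "card B = (\<Sum>x\<in>R. f x - 2) + 2"
  shows "\<exists>E. is_tree (R \<union> B) E \<and> non_crossing E \<and> leaves (R \<union> B) E = B \<and>
           (\<forall>x\<in>R. degree E x = f x)"
proof -
  define g where "g x = (if x \<in> R then f x else 1)" for x
  have "(\<Sum>x\<in>R. int (g x) - 2) = int (\<Sum>x\<in>R. f x - 2)"
    using assms(5) unfolding g_def by (simp add: of_nat_sum of_nat_diff)
  moreover have "(\<Sum>x\<in>B. int (g x) - 2) = (\<Sum>x\<in>B. -1)"
    using assms(3) unfolding g_def by (intro sum.cong) auto
  ultimately have "(\<Sum>x\<in>R \<union> B. int (g x) - 2) = -2"
    using assms(1-3,6) by (simp add: sum.union_disjoint)
  moreover have "2 \<le> card (R \<union> B)"
    using assms(1,2,6) card_mono[of "R \<union> B" B] by simp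
  ultimately have "tree_degree_sequence (R \<union> B) g"
    using assms(5) unfolding tree_degree_sequence_def g_def by auto
  then obtain E where E: "is_tree (R \<union> B) E" "non_crossing E" "\<forall>x\<in>R \<union> B. degree E x = g x"
    using plane_tree_realizable_if_tree_degree_sequence[OF assms(4)]
    unfolding plane_tree_realizable_def by blast
  moreover have "degree E x = 1 \<longleftrightarrow> x \<in> B" if "x \<in> R \<union> B" for x
    using that E(3) assms(3,5) unfolding g_def by auto
  then have "leaves (R \<union> B) E = B" unfolding leaves_def by auto
  ultimately show ?thesis unfolding g_def by auto
qed

end
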